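(* Let $G$ be a graph and $\overline{G}$ its $K_{n,n}$-augmentation. Then $G$ is circulant if and only if $\overline{G}$ is circulant.
   Context: A graph on $n$ vertices is circulant if its vertices can be numbered $v_0,\dots,v_{n-1}$ so that, for all $x,z,d$, whenever $v_x$ and $v_{(x+d)\bmod n}$ are adjacent, $v_z$ and $v_{(z+d)\bmod n}$ are adjacent. For a graph $G=(V,E)$ with $n$ vertices, a clone of $G$ is a graph $G'=(V',E')$ isomorphic to $G$ with $V\cap V'=\emptyset$; the $K_{n,n}$-augmentation of $G$ is the graph $\overline{G}$ with vertex set $V\cup V'$ and edge set $E\cup E'\cup\{\{v,w\}: v\in V, w\in V'\}$ (the join of $G$ with a clone). *)

theory Defs
  imports Main
begin

definition graph :: "'a set \<Rightarrow> ('a \<Rightarrow> 'a \<Rightarrow> bool) \<Rightarrow> bool" where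
  "graph V E \<longleftrightarrow> finite V \<and> (\<forall>x y. E x y \<longrightarrow> E y x) \<and> (\<forall>x. \<not> E x x)
     \<and> (\<forall>x y. E x y \<longrightarrow> x \<in> V \<and> y \<in> V)"

definition circulant :: "'a set \<Rightarrow> ('a \<Rightarrow> 'a \<Rightarrow> bool) \<Rightarrow> bool" where
  "circulant V E \<longleftrightarrow> (\<exists>v. bij_betw v {0..<card V} V \<and>
     (\<forall>x z d. x < card V \<longrightarrow> z < card V \<longrightarrow> d < card V \<longrightarrow>
        E (v x) (v ((x + d) mod card V)) \<longrightarrow> E (v z) (v ((z + d) mod card V))))"

text \<open>K_{n,n}-augmentation: join of G with a disjoint clone. Original vertices are
  tagged Inl, clone vertices Inr.\<close>
definition aug_V :: "'a set \<Rightarrow> ('a + 'a) set" where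
  "aug_V V = Inl ` V \<union> Inr ` V"

fun aug_E :: "'a set \<Rightarrow> ('a \<Rightarrow> 'a \<Rightarrow> bool) \<Rightarrow> 'a + 'a \<Rightarrow> 'a + 'a \<Rightarrow> bool" where
  "aug_E V E (Inl x) (Inl y) = E x y"
| "aug_E V E (Inr x) (Inr y) = E x y"
| "aug_E V E (Inl x) (Inr y) = (x \<in> V \<and> y \<in> V)"
| "aug_E V E (Inr x) (Inl y) = (x \<in> V \<and> y \<in> V)"

end

theory Submission
  imports Defs
begin

text \<open>
  If G is circulant for the numbering v, interleave G with its clone, putting v k at position
  2k and its copy at 2k + 1: odd differences join G to the clone and are always edges, while an
  even difference 2d behaves like d in G.

  Conversely, fix a circulant numbering of the augmentation on positions modulo N = 2n.
  Non-adjacent vertices lie on the same side, so every difference that is not an edge is a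
  period of the side pattern (original vs. clone). If h is the least period, every difference
  not divisible by h is an edge, and the side pattern repeats the c original positions of
  [0, h) in each of the M = N/h blocks. Enumerating the original positions block by block,
  position k of G corresponds to residue k mod c within block k div c, and adjacency in G
  becomes a function of the difference modulo n = M c.
\<close>

lemma add_mod_diff_mod:
  fixes n :: nat
  assumes "x < n" "d < n"
  shows "((x + d) mod n + n - x) mod n = d"
  using assms by (cases "x + d < n") (auto simp: le_mod_geq)

lemma add_diff_mod_mod:
  fixes n :: nat
  assumes "x < n" "y < n"
  shows "(x + (y + n - x) mod n) mod n = y"
  using assms by (simp add: mod_add_right_eq)

lemma mod_diff_dvd_iff:
  fixes d M x y :: nat
  assumes "x < M * d" "y < M * d"
  shows "d dvd (y + M * d - x) mod (M * d) \<longleftrightarrow> x mod d = y mod d"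
proof -
  have "d dvd (y + M * d - x) mod (M * d) \<longleftrightarrow> d dvd y + M * d - x"
    by (simp add: dvd_mod_iff)
  also have "\<dots> \<longleftrightarrow> int d dvd int y + int M * int d - int x"
    using assms by (simp add: of_nat_diff flip: int_dvd_int_iff)
  also have "\<dots> \<longleftrightarrow> int d dvd int y - int x"
    by (metis diff_add_eq dvd_add_times_triv_right_iff)
  also have "\<dots> \<longleftrightarrow> int y mod int d = int x mod int d"
    by (simp add: mod_eq_dvd_iff)
  also have "\<dots> \<longleftrightarrow> x mod d = y mod d"
    by (metis of_nat_eq_iff of_nat_mod)
  finally show ?thesis .
qed

lemma mod_diff_same_residue:
  fixes d M x y :: nat
  assumes "x < M * d" "x mod d = y mod d"
  shows "(y + M * d - x) mod (M * d) = ((y div d + M - x div d) mod M) * d"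
proof -
  define qx qy r where "qx = x div d" and "qy = y div d" and "r = y mod d"
  have "x = qx * d + r" using assms(2) unfolding qx_def r_def by (metis div_mult_mod_eq)
  moreover have "y = qy * d + r" unfolding qy_def r_def by simp
  moreover have "qx < M" unfolding qx_def using assms(1) by (simp add: less_mult_imp_div_less)
  ultimately have "y + M * d - x = (qy + M - qx) * d"
    by (simp add: diff_mult_distrib add_mult_distrib)
  then show ?thesis unfolding qx_def qy_def by (simp add: mod_mult_mult2)
qed

lemma circulant_iff_difference:
  "circulant V E \<longleftrightarrow> (\<exists>v S. bij_betw v {0..<card V} V \<and>
     (\<forall>x<card V. \<forall>y<card V. E (v x) (v y) = S ((y + card V - x) mod card V)))"
  (is "_ \<longleftrightarrow> (\<exists>v S. ?bij v \<and> ?diff v S)")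
proof
  assume "circulant V E"
  then obtain v where v: "?bij v" and
    shift: "\<And>x z d. x < card V \<Longrightarrow> z < card V \<Longrightarrow> d < card V \<Longrightarrow>
        E (v x) (v ((x + d) mod card V)) \<Longrightarrow> E (v z) (v ((z + d) mod card V))"
    unfolding circulant_def by blast
  have diff: "?diff v (\<lambda>d. E (v 0) (v d))"
  proof (intro allI impI)
    fix x y assume "x < card V" "y < card V"
    moreover define d where "d = (y + card V - x) mod card V"
    ultimately have "d < card V" "(x + d) mod card V = y" "(0 + d) mod card V = d"
      using add_diff_mod_mod by auto
    then show "E (v x) (v y) = E (v 0) (v d)"
      using shift[of x 0 d] shift[of 0 x d] \<open>x < card V\<close> by auto
  qed
  show "\<exists>v S. ?bij v \<and> ?diff v S" using v diff by (intro exI conjI)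
next
  assume "\<exists>v S. ?bij v \<and> ?diff v S"
  then obtain v S where "?bij v" "?diff v S" by blast
  then show "circulant V E"
    unfolding circulant_def by (auto simp: add_mod_diff_mod)
qed

lemma circulant_empty: "circulant {} E"
  by (simp add: circulant_def bij_betw_def)

lemma card_aug_V: "finite V \<Longrightarrow> card (aug_V V) = 2 * card V"
  unfolding aug_V_def by (subst card_Un_disjoint) (auto simp: card_image)

lemma bij_betw_interleave:
  assumes "bij_betw v {0..<n::nat} V"
  shows "bij_betw (\<lambda>i. if even i then Inl (v (i div 2)) else Inr (v (i div 2)))
           {0..<2 * n} (aug_V V)" (is "bij_betw ?w _ _")
proof -
  have inj: "inj_on v {0..<n}" and img: "v ` {0..<n} = V"
    using assms by (auto simp: bij_betw_def)
  have "inj_on ?w {0..<2 * n}"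
  proof (rule inj_onI)
    fix i j assume "i \<in> {0..<2 * n}" "j \<in> {0..<2 * n}" "?w i = ?w j"
    then have "i mod 2 = j mod 2" "v (i div 2) = v (j div 2)"
      by (auto simp: mod2_eq_if split: if_splits)
    moreover have "i div 2 < n" "j div 2 < n" using \<open>i \<in> _\<close> \<open>j \<in> _\<close> by auto
    ultimately show "i = j" using inj by (metis atLeastLessThan_iff div_mult_mod_eq inj_on_def zero_le)
  qed
  moreover have "?w ` {0..<2 * n} = aug_V V"
  proof
    show "?w ` {0..<2 * n} \<subseteq> aug_V V" using img by (auto simp: aug_V_def)
    show "aug_V V \<subseteq> ?w ` {0..<2 * n}"
    proof
      fix a assume "a \<in> aug_V V"
      then obtain k where k: "k < n" and "a = ?w (2 * k) \<or> a = ?w (2 * k + 1)"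
        using img by (auto simp: aug_V_def)
      moreover have "2 * k \<in> {0..<2 * n}" "2 * k + 1 \<in> {0..<2 * n}" using k by auto
      ultimately show "a \<in> ?w ` {0..<2 * n}" by blast
    qed
  qed
  ultimately show ?thesis by (simp add: bij_betw_def)
qed

lemma circulant_aug_if_circulant:
  assumes "finite V" and "circulant V E"
  shows "circulant (aug_V V) (aug_E V E)"
proof -
  let ?n = "card V"
  obtain v S where v: "bij_betw v {0..<?n} V"
    and S: "\<forall>x<?n. \<forall>y<?n. E (v x) (v y) = S ((y + ?n - x) mod ?n)"
    using assms(2) unfolding circulant_iff_difference by blast
  define w :: "nat \<Rightarrow> 'a + 'a"
    where "w i = (if even i then Inl (v (i div 2)) else Inr (v (i div 2)))" for i
  have vV: "k < ?n \<Longrightarrow> v k \<in> V" for k using v by (auto simp: bij_betw_def)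
  have adj: "aug_E V E (w x) (w y) = (odd \<delta> \<or> S (\<delta> div 2))"
    if "x < 2 * ?n" "y < 2 * ?n" and \<delta>: "\<delta> = (y + 2 * ?n - x) mod (2 * ?n)" for x y \<delta>
  proof (cases "x mod 2 = y mod 2")
    case True
    then have "\<delta> = ((y div 2 + ?n - x div 2) mod ?n) * 2"
      using mod_diff_same_residue[of x ?n 2 y] that by (simp add: mult.commute)
    moreover have "x div 2 < ?n" "y div 2 < ?n" using that by auto
    ultimately show ?thesis using True S by (auto simp: w_def mod2_eq_if)
  next
    case False
    then have "odd \<delta>" using mod_diff_dvd_iff[of x ?n 2 y] that by (simp add: mult.commute)
    moreover have "aug_E V E (w x) (w y)"
      using False vV that by (auto simp: w_def mod2_eq_if)
    ultimately show ?thesis by simp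
  qed
  have "bij_betw w {0..<2 * ?n} (aug_V V)"
    unfolding w_def by (rule bij_betw_interleave[OF v])
  with adj show ?thesis
    unfolding circulant_iff_difference card_aug_V[OF assms(1)]
    by (intro exI[of _ w] exI[of _ "\<lambda>\<delta>. odd \<delta> \<or> S (\<delta> div 2)"] conjI) auto
qed

definition is_period :: "(nat \<Rightarrow> 'b) \<Rightarrow> nat \<Rightarrow> bool" where
  "is_period s p \<longleftrightarrow> (\<forall>i. s (i + p) = s i)"

lemma is_period_mult:
  assumes "is_period s p"
  shows "is_period s (k * p)"
proof (induction k)
  case (Suc k)
  then show ?case using assms by (simp add: is_period_def add.assoc[symmetric])
qed (simp add: is_period_def)

lemma is_period_mod_eq:
  assumes "is_period s p"
  shows "s i = s (i mod p)"
  using is_period_mult[OF assms, of "i div p"] unfolding is_period_def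
  by (metis div_mult_mod_eq add.commute)

lemma is_period_mod:
  assumes "is_period s p" and "is_period s q"
  shows "is_period s (p mod q)"
  unfolding is_period_def
proof
  fix i
  have "s (i + p mod q) = s (i + p mod q + p div q * q)"
    using is_period_mult[OF assms(2)] unfolding is_period_def by presburger
  also have "\<dots> = s (i + p)" by (metis add.assoc div_mult_mod_eq add.commute)
  also have "\<dots> = s i" using assms(1) by (simp add: is_period_def)
  finally show "s (i + p mod q) = s i" .
qed

lemma least_period_dvd:
  assumes "is_period s N" and "0 < N"
  obtains h where "0 < h" "is_period s h" "\<And>p. is_period s p \<Longrightarrow> h dvd p"
proof
  define h where "h = (LEAST h. 0 < h \<and> is_period s h)"
  show h: "0 < h" "is_period s h"
    using LeastI[of "\<lambda>h. 0 < h \<and> is_period s h", OF conjI[OF assms(2,1)]]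
    unfolding h_def by auto
  show "h dvd p" if "is_period s p" for p
  proof (rule ccontr)
    assume "\<not> h dvd p"
    then have "0 < p mod h" "p mod h < h" using h(1) by (auto simp: dvd_eq_mod_eq_0)
    moreover have "is_period s (p mod h)" using is_period_mod[OF that h(2)] .
    ultimately show False using not_less_Least[of "p mod h"] unfolding h_def by blast
  qed
qed

lemma aug_nonadjacent_same_side:
  assumes "a \<in> aug_V V" and "b \<in> aug_V V" and "\<not> aug_E V E a b"
  shows "isl a = isl b"
  using assms by (cases a; cases b) (auto simp: aug_V_def)

lemma bij_betw_isl_positions:
  assumes "bij_betw w A (aug_V V)"
  shows "bij_betw w {i \<in> A. isl (w i)} (Inl ` V)"
proof -
  have "w ` {i \<in> A. isl (w i)} = {a \<in> aug_V V. isl a}"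
    using assms by (auto simp: bij_betw_def)
  also have "\<dots> = Inl ` V" by (auto simp: aug_V_def)
  finally show ?thesis
    using assms by (auto simp: bij_betw_def intro: inj_on_subset)
qed

text \<open>With r enumerating a set R of residues in [0, h), the positions i < M h with
  i mod h in R, listed block by block.\<close>
definition block_enum :: "nat \<Rightarrow> nat \<Rightarrow> (nat \<Rightarrow> nat) \<Rightarrow> nat \<Rightarrow> nat" where
  "block_enum c h r k = k div c * h + r (k mod c)"

lemma block_enum_div_mod:
  assumes "0 < c" and "r ` {0..<c} \<subseteq> {0..<h}"
  shows "block_enum c h r k div h = k div c" and "block_enum c h r k mod h = r (k mod c)"
proof -
  have "k mod c \<in> {0..<c}" using assms(1) by simp
  then have "r (k mod c) \<in> {0..<h}" using assms(2) by blast
  then have "r (k mod c) < h" by simp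
  then show "block_enum c h r k div h = k div c" "block_enum c h r k mod h = r (k mod c)"
    by (simp_all add: block_enum_def)
qed

lemma bij_betw_block_enum:
  assumes "bij_betw r {0..<c} R" and "R \<subseteq> {0..<h}"
  shows "bij_betw (block_enum c h r) {0..<M * c} {i. i < M * h \<and> i mod h \<in> R}"
proof (cases "c = 0")
  case True
  then show ?thesis using assms(1) by (simp add: bij_betw_def)
next
  case False
  then have c0: "0 < c" by simp
  have r: "r ` {0..<c} \<subseteq> {0..<h}" using assms by (auto simp: bij_betw_def)
  note div_mod = block_enum_div_mod[OF c0 r]
  show ?thesis unfolding bij_betw_def
  proof
    show "inj_on (block_enum c h r) {0..<M * c}"
    proof (rule inj_onI)
      fix k k' assume "block_enum c h r k = block_enum c h r k'"
      then have "k div c = k' div c" "r (k mod c) = r (k' mod c)"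
        using div_mod by metis+
      moreover have "k mod c \<in> {0..<c}" "k' mod c \<in> {0..<c}" using c0 by auto
      ultimately show "k = k'"
        using assms(1) by (metis bij_betw_def div_mult_mod_eq inj_on_def)
    qed
    show "block_enum c h r ` {0..<M * c} = {i. i < M * h \<and> i mod h \<in> R}"
    proof (intro equalityI subsetI)
      fix i assume "i \<in> block_enum c h r ` {0..<M * c}"
      then obtain k where "k < M * c" "i = block_enum c h r k" by auto
      have "0 < h" using r c0 by fastforce
      then have "i < M * h"
        using div_mod c0 \<open>k < M * c\<close> \<open>i = _\<close> by (metis div_less_iff_less_mult)
      moreover have "i mod h \<in> R"
        using div_mod c0 \<open>i = _\<close> assms(1) by (auto simp: bij_betw_def)
      ultimately show "i \<in> {i. i < M * h \<and> i mod h \<in> R}" by simp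
    next
      fix i assume i: "i \<in> {i. i < M * h \<and> i mod h \<in> R}"
      then obtain j where j: "j < c" "r j = i mod h" using assms(1) by (auto simp: bij_betw_def)
      define k where "k = i div h * c + j"
      have "k div c = i div h" "k mod c = j" using j unfolding k_def by auto
      then have "block_enum c h r k = i" by (simp add: block_enum_def j(2))
      moreover have "k < M * c"
      proof -
        have "i div h < M" using i by (simp add: less_mult_imp_div_less)
        then have "Suc (i div h) * c \<le> M * c" by (intro mult_le_mono1) simp
        then show ?thesis using j(1) unfolding k_def by simp
      qed
      ultimately show "i \<in> block_enum c h r ` {0..<M * c}" by force
    qed
  qed
qed

lemma block_enum_mod_diff:
  assumes r: "inj_on r {0..<c}" "r ` {0..<c} \<subseteq> {0..<h}"
    and xy: "x < M * c" "y < M * c"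
  defines "p \<equiv> block_enum c h r"
  shows "h dvd (p y + M * h - p x) mod (M * h) \<longleftrightarrow> c dvd (y + M * c - x) mod (M * c)"
    and "c dvd (y + M * c - x) mod (M * c) \<Longrightarrow>
      (p y + M * h - p x) mod (M * h) = (y + M * c - x) mod (M * c) div c * h"
proof -
  have c0: "0 < c" using xy by (cases "c = 0") auto
  then have h0: "0 < h" using r(2) by fastforce
  note div_mod = block_enum_div_mod[OF c0 r(2), folded p_def]
  have p: "p x < M * h" "p y < M * h"
    using xy div_mod by (simp_all add: div_less_iff_less_mult[OF h0, symmetric] less_mult_imp_div_less)
  have "p x mod h = p y mod h \<longleftrightarrow> x mod c = y mod c"
    using div_mod r(1) c0 by (simp add: inj_on_eq_iff)
  then show dvd: "h dvd (p y + M * h - p x) mod (M * h) \<longleftrightarrow> c dvd (y + M * c - x) mod (M * c)"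
    using mod_diff_dvd_iff[OF p] mod_diff_dvd_iff[OF xy] by simp
  assume "c dvd (y + M * c - x) mod (M * c)"
  then have "x mod c = y mod c" "p x mod h = p y mod h"
    using dvd mod_diff_dvd_iff[OF p] mod_diff_dvd_iff[OF xy] by simp_all
  then show "(p y + M * h - p x) mod (M * h) = (y + M * c - x) mod (M * c) div c * h"
    using mod_diff_same_residue[OF p(1)] mod_diff_same_residue[OF xy(1)] div_mod c0 by simp
qed

lemma aug_circulant_side_period:
  fixes N :: nat and w :: "nat \<Rightarrow> 'a + 'a"
  assumes w: "bij_betw w {0..<N} (aug_V V)" and N0: "0 < N"
    and adj: "\<forall>x<N. \<forall>y<N. aug_E V E (w x) (w y) = A ((y + N - x) mod N)"
  obtains h where "h dvd N"
    and "\<And>i. i < N \<Longrightarrow> isl (w i) = isl (w (i mod h))"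
    and "\<And>d. d < N \<Longrightarrow> \<not> h dvd d \<Longrightarrow> A d"
proof -
  define s where "s i = isl (w (i mod N))" for i
  have wN: "i < N \<Longrightarrow> w i \<in> aug_V V" for i using bij_betwE[OF w] by auto
  have period_N: "is_period s N" by (simp add: is_period_def s_def)
  \<comment> \<open>a non-edge joins two vertices on the same side\<close>
  have nonedge_period: "is_period s d" if "d < N" and "\<not> A d" for d
    unfolding is_period_def
  proof
    fix i
    let ?x = "i mod N" and ?y = "(i mod N + d) mod N"
    have "(?y + N - ?x) mod N = d" using N0 that(1) by (simp add: add_mod_diff_mod)
    then have "\<not> aug_E V E (w ?x) (w ?y)" using adj that(2) N0 by simp
    then have "isl (w ?x) = isl (w ?y)" using wN N0 by (intro aug_nonadjacent_same_side) simp_all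
    then show "s (i + d) = s i" by (simp add: s_def mod_add_left_eq)
  qed
  obtain h where period_h: "is_period s h"
    and least: "\<And>p. is_period s p \<Longrightarrow> h dvd p"
    using least_period_dvd[OF period_N N0] by blast
  show thesis
  proof (rule that)
    show "h dvd N" using least[OF period_N] .
    show "isl (w i) = isl (w (i mod h))" if "i < N" for i
    proof -
      have "i mod h < N" using that by (meson le_less_trans mod_le_divisor mod_less_eq_dividend)
      then show ?thesis using is_period_mod_eq[OF period_h, of i] that by (simp add: s_def)
    qed
    show "A d" if "d < N" and "\<not> h dvd d" for d
      using nonedge_period[OF that(1)] least that(2) by blast
  qed
qed

lemma circulant_if_aug_sides_periodic:
  fixes M h :: nat and w :: "nat \<Rightarrow> 'a + 'a"
  assumes w: "bij_betw w {0..<M * h} (aug_V V)"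
    and adj: "\<forall>x<M * h. \<forall>y<M * h. aug_E V E (w x) (w y) = A ((y + M * h - x) mod (M * h))"
    and sides: "\<And>i. i < M * h \<Longrightarrow> isl (w i) = isl (w (i mod h))"
    and edges: "\<And>d. d < M * h \<Longrightarrow> \<not> h dvd d \<Longrightarrow> A d"
  shows "circulant V E"
proof -
  define R where "R = {j. j < h \<and> isl (w j)}"
  define c where "c = card R"
  obtain r where r: "bij_betw r {0..<c} R"
    using ex_bij_betw_nat_finite[of R] unfolding c_def R_def by auto
  define p where "p = block_enum c h r"
  have R_sub: "R \<subseteq> {0..<h}" by (auto simp: R_def)
  have r_inj: "inj_on r {0..<c}" and r_img: "r ` {0..<c} \<subseteq> {0..<h}"
    using r R_sub by (auto simp: bij_betw_def)
  have "{i. i < M * h \<and> i mod h \<in> R} = {i \<in> {0..<M * h}. isl (w i)}"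
    using sides by (auto simp: R_def) (metis gr_zeroI mod_less_divisor mult_0_right not_less_zero)
  then have p: "bij_betw p {0..<M * c} {i \<in> {0..<M * h}. isl (w i)}"
    using bij_betw_block_enum[OF r R_sub, of M] unfolding p_def by simp
  have p_less: "p k < M * h" if "k < M * c" for k
    using bij_betwE[OF p] that by auto
  have wp: "bij_betw (w \<circ> p) {0..<M * c} (Inl ` V)"
    using bij_betw_trans[OF p bij_betw_isl_positions[OF w]] .
  define v where "v = projl \<circ> w \<circ> p"
  have "bij_betw projl (Inl ` V) V" by (auto simp: bij_betw_def inj_on_def image_image)
  then have v: "bij_betw v {0..<M * c} V"
    unfolding v_def comp_assoc by (rule bij_betw_trans[OF wp])
  have card: "card V = M * c" using bij_betw_same_card[OF v] by simp
  have wpv: "w (p k) = Inl (v k)" if "k < M * c" for k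
    using bij_betwE[OF wp] that by (force simp: v_def)
  define S where "S \<delta> = (if c dvd \<delta> then A (\<delta> div c * h) else True)" for \<delta>
  have "E (v x) (v y) = S ((y + M * c - x) mod (M * c))" if xy: "x < M * c" "y < M * c" for x y
  proof -
    define \<delta> where "\<delta> = (p y + M * h - p x) mod (M * h)"
    have "E (v x) (v y) = aug_E V E (w (p x)) (w (p y))" using wpv xy by simp
    also have "\<dots> = A \<delta>" using adj p_less xy unfolding \<delta>_def by simp
    finally have E_A: "E (v x) (v y) = A \<delta>" .
    note \<delta> = block_enum_mod_diff[OF r_inj r_img xy, folded p_def, folded \<delta>_def]
    show ?thesis
    proof (cases "c dvd (y + M * c - x) mod (M * c)")
      case True
      then show ?thesis using E_A \<delta>(2) by (simp add: S_def)
    next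
      case False
      have "\<delta> < M * h" using p_less[OF xy(1)] unfolding \<delta>_def by (intro mod_less_divisor) linarith
      then have "A \<delta>" using edges \<delta>(1) False by blast
      then show ?thesis using E_A False by (simp add: S_def)
    qed
  qed
  then show ?thesis
    unfolding circulant_iff_difference card using v
    by (intro exI[of _ v] exI[of _ S] conjI) auto
qed

lemma circulant_if_aug_circulant:
  assumes "finite V" and "circulant (aug_V V) (aug_E V E)"
  shows "circulant V E"
proof (cases "V = {}")
  case True
  then show ?thesis by (simp add: circulant_empty)
next
  case False
  let ?N = "2 * card V"
  have N0: "0 < ?N" using assms(1) False by (simp add: card_gt_0_iff)
  obtain w A where w: "bij_betw w {0..<?N} (aug_V V)"
    and adj: "\<forall>x<?N. \<forall>y<?N. aug_E V E (w x) (w y) = A ((y + ?N - x) mod ?N)"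
    using assms(2) unfolding circulant_iff_difference card_aug_V[OF assms(1)] by blast
  obtain h where "h dvd ?N"
    and sides: "\<And>i. i < ?N \<Longrightarrow> isl (w i) = isl (w (i mod h))"
    and edges: "\<And>d. d < ?N \<Longrightarrow> \<not> h dvd d \<Longrightarrow> A d"
    using aug_circulant_side_period[OF w N0 adj] by blast
  then obtain M where "?N = M * h" by (metis dvd_div_mult_self)
  then show ?thesis
    using circulant_if_aug_sides_periodic[of w M h V E A] w adj sides edges by simp
qed

theorem lemma10:
  fixes V :: "'a set" and E :: "'a \<Rightarrow> 'a \<Rightarrow> bool"
  assumes "graph V E"
  shows "circulant V E \<longleftrightarrow> circulant (aug_V V) (aug_E V E)"
proof -
  have "finite V" using assms by (simp add: graph_def)
  then show ?thesis using circulant_aug_if_circulant circulant_if_aug_circulant by blast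
qed

end
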